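(* Let $M\subset\mathbf{R}^{n+1}$ be a smooth closed connected mean convex hypersurface and let $u$ be the arrival time of the mean curvature flow starting from $M$. Suppose that $\nabla u(0)=0$ and $\mathrm{Hess}_u(0)$ has kernel $K$, and let $\Pi$ denote orthogonal projection onto $K^{\perp}$. Then there exist $\epsilon>0$ and $C$ such that for every $p\in B_{\epsilon}\cap K$ there exists $$q\in B_{C|p|}\cap\left(p+K^{\perp}\right)\quad\text{with}\quad \Pi(\nabla u(q))=0,$$ where $B_r$ denotes the ball of radius $r$ centered at $0$.
   Context: Mean convex means the mean curvature is non-negative. The arrival time $u$ is defined on the compact domain bounded by $M$: $u(x)$ is the time at which the front passes through $x$; equivalently $u$ is the Lipschitz viscosity solution of $-1=|\nabla u|\,\mathrm{div}(\nabla u/|\nabla u|)$ with $u=0$ on $M$. It is known that $u$ is twice differentiable everywhere, so $\mathrm{Hess}_u(0)$ is defined. No $C^2$ assumption on $u$ is made here. *)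

theory Defs
  imports "HOL-Analysis.Analysis"
begin

definition grad :: "('a::euclidean_space \<Rightarrow> real) \<Rightarrow> 'a \<Rightarrow> 'a" where
  "grad u x = (\<Sum>b\<in>Basis. frechet_derivative u (at x) b *\<^sub>R b)"

definition hess :: "('a::euclidean_space \<Rightarrow> real) \<Rightarrow> 'a \<Rightarrow> 'a \<Rightarrow> 'a" where
  "hess u x = frechet_derivative (grad u) (at x)"

definition twice_differentiable_at :: "('a::euclidean_space \<Rightarrow> real) \<Rightarrow> 'a \<Rightarrow> bool" where
  "twice_differentiable_at u x \<longleftrightarrow>
     (\<forall>\<^sub>F y in nhds x. u differentiable at y) \<and> grad u differentiable at x"

definition orth_proj :: "'a::euclidean_space set \<Rightarrow> 'a \<Rightarrow> 'a" where
  "orth_proj S x = (THE y. y \<in> S \<and> x - y \<in> orthogonal_comp S)"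

end

theory Submission
  imports Defs
begin

text \<open>
  Write \<open>g = grad u\<close>, \<open>H = hess u 0\<close> and \<open>V = K\<^sup>\<bottom>\<close>. Since the gradient is differentiable
  at \<open>0\<close> and \<open>u\<close> is differentiable nearby, comparing the two ways of expanding a second
  difference of \<open>u\<close> shows that \<open>H\<close> is symmetric; hence \<open>H\<close> maps into \<open>V\<close> and is
  invertible there. For \<open>p \<in> K\<close> look for \<open>q = p + w\<close>, \<open>w \<in> V\<close>, as a fixed point of
  \<open>w \<mapsto> w - t H (g (p + w))\<close> on the ball of radius \<open>|p|\<close> in \<open>V\<close>. As \<open>g (p + w) = H w + o(|p|)\<close>,
  this map is a small perturbation of the Landweber step \<open>w \<mapsto> w - t H (H w)\<close>, which
  contracts \<open>V\<close>; so it maps the ball into itself and Brouwer's theorem gives a fixed point,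
  at which \<open>H (g q) = 0\<close>, i.e.\ \<open>g q \<in> K\<close>.
\<close>

lemma has_derivative_grad:
  fixes u :: "'a::euclidean_space \<Rightarrow> real"
  assumes "u differentiable at x"
  shows "(u has_derivative (\<lambda>v. grad u x \<bullet> v)) (at x)"
proof -
  define D where "D = frechet_derivative u (at x)"
  have uD: "(u has_derivative D) (at x)"
    using assms frechet_derivative_works D_def by blast
  have lin: "linear D"
    using has_derivative_linear[OF uD] .
  have "D v = grad u x \<bullet> v" for v
  proof -
    have "D v = D (\<Sum>b\<in>Basis. (v \<bullet> b) *\<^sub>R b)"
      by (simp add: euclidean_representation)
    also have "\<dots> = (\<Sum>b\<in>Basis. (v \<bullet> b) * D b)"
      by (simp add: linear_sum[OF lin] linear_scale[OF lin])
    also have "\<dots> = grad u x \<bullet> v"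
      by (simp add: grad_def D_def inner_sum_right inner_commute mult.commute)
    finally show ?thesis .
  qed
  then have "D = (\<lambda>v. grad u x \<bullet> v)"
    by auto
  with uD show ?thesis
    by simp
qed

lemma has_real_derivative_along_line:
  fixes u :: "'a::euclidean_space \<Rightarrow> real"
  assumes "(u has_derivative (\<lambda>v. G \<bullet> v)) (at (a + s *\<^sub>R h))"
  shows "((\<lambda>s. u (a + s *\<^sub>R h)) has_real_derivative (G \<bullet> h)) (at s)"
proof -
  have "((\<lambda>s. a + s *\<^sub>R h) has_derivative (\<lambda>s. s *\<^sub>R h)) (at s)"
    by (auto intro!: derivative_eq_intros)
  from diff_chain_at[OF this assms] show ?thesis
    by (simp add: has_field_derivative_def o_def mult.commute[of _ "G \<bullet> h"])
qed

lemma norm_scaleR_add_scaleR_le: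
  assumes "0 \<le> x" "x \<le> t" "0 \<le> s" "s \<le> t"
  shows "norm (x *\<^sub>R k + s *\<^sub>R h) \<le> t * norm k + t * norm h"
  using assms norm_triangle_ineq[of "x *\<^sub>R k" "s *\<^sub>R h"]
    mult_right_mono[of x t "norm k"] mult_right_mono[of s t "norm h"] by simp

lemma second_difference_mean_value:
  fixes u :: "'a::euclidean_space \<Rightarrow> real" and g :: "'a \<Rightarrow> 'a"
  assumes "0 < t" and "t * norm k + t * norm h < r"
    and du: "\<And>y. y \<in> ball a r \<Longrightarrow> (u has_derivative (\<lambda>v. g y \<bullet> v)) (at y)"
  obtains \<xi> where "0 < \<xi>" "\<xi> < t"
    and "u (a + t *\<^sub>R k + t *\<^sub>R h) - u (a + t *\<^sub>R h) - u (a + t *\<^sub>R k) + u a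
           = t * ((g (a + t *\<^sub>R k + \<xi> *\<^sub>R h) - g (a + \<xi> *\<^sub>R h)) \<bullet> h)"
proof -
  have "a + v \<in> ball a r" if "norm v < r" for v
    using that by (simp add: dist_norm)
  then have in_ball: "a + x *\<^sub>R k + s *\<^sub>R h \<in> ball a r"
    if "0 \<le> x" "x \<le> t" "0 \<le> s" "s \<le> t" for x s
    using norm_scaleR_add_scaleR_le[OF that, of k h] assms(2) by (simp add: add.assoc)
  define \<phi> where "\<phi> s = u (a + t *\<^sub>R k + s *\<^sub>R h) - u (a + s *\<^sub>R h)" for s
  define \<phi>' where "\<phi>' s = g (a + t *\<^sub>R k + s *\<^sub>R h) \<bullet> h - g (a + s *\<^sub>R h) \<bullet> h" for s
  have "DERIV \<phi> s :> \<phi>' s" if "0 \<le> s" "s \<le> t" for s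
    using in_ball[of t s] in_ball[of 0 s] that \<open>0 < t\<close> unfolding \<phi>_def \<phi>'_def
    by (intro DERIV_diff has_real_derivative_along_line du) simp_all
  then obtain \<xi> where "0 < \<xi>" "\<xi> < t" "\<phi> t - \<phi> 0 = (t - 0) * \<phi>' \<xi>"
    using MVT2[of 0 t \<phi> \<phi>'] \<open>0 < t\<close> by auto
  moreover have "u (a + t *\<^sub>R k + t *\<^sub>R h) - u (a + t *\<^sub>R h) - u (a + t *\<^sub>R k) + u a = \<phi> t - \<phi> 0"
    by (simp add: \<phi>_def)
  ultimately show thesis
    using that by (simp add: \<phi>'_def inner_diff_left)
qed

lemma second_difference_estimate:
  fixes u :: "'a::euclidean_space \<Rightarrow> real" and g H :: "'a \<Rightarrow> 'a"
  assumes gH: "(g has_derivative H) (at a)" and "r > 0"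
    and du: "\<And>y. y \<in> ball a r \<Longrightarrow> (u has_derivative (\<lambda>v. g y \<bullet> v)) (at y)"
    and "\<eta> > 0"
  shows "\<exists>\<delta>>0. \<forall>t. 0 < t \<and> t < \<delta> \<longrightarrow>
    \<bar>u (a + t *\<^sub>R k + t *\<^sub>R h) - u (a + t *\<^sub>R h) - u (a + t *\<^sub>R k) + u a - t\<^sup>2 * (H k \<bullet> h)\<bar>
      \<le> t\<^sup>2 * \<eta> * (2 * norm h + norm k) * norm h"
proof -
  have lin: "linear H"
    using has_derivative_linear[OF gH] .
  obtain d where "d > 0" and d: "\<And>y. norm y < d \<Longrightarrow> norm (g (a + y) - g a - H y) \<le> \<eta> * norm y"
    using gH \<open>\<eta> > 0\<close> unfolding has_derivative_at_alt by (metis add_diff_cancel_left')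
  define N where "N = norm h + norm k + 1"
  have "N > 0"
    unfolding N_def by (simp add: add_nonneg_pos)
  define \<delta> where "\<delta> = min d r / N"
  have "\<delta> > 0"
    using \<open>d > 0\<close> \<open>r > 0\<close> \<open>N > 0\<close> unfolding \<delta>_def by simp
  show ?thesis
  proof (intro exI[of _ \<delta>] conjI allI impI \<open>\<delta> > 0\<close>)
    fix t :: real assume t: "0 < t \<and> t < \<delta>"
    have "t * N < min d r"
      using t \<open>N > 0\<close> by (simp add: \<delta>_def pos_less_divide_eq)
    then have tkh: "t * norm k + t * norm h < min d r"
      unfolding N_def using t by (simp add: algebra_simps)
    obtain \<xi> where \<xi>: "0 < \<xi>" "\<xi> < t"
      and mv: "u (a + t *\<^sub>R k + t *\<^sub>R h) - u (a + t *\<^sub>R h) - u (a + t *\<^sub>R k) + u a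
                 = t * ((g (a + t *\<^sub>R k + \<xi> *\<^sub>R h) - g (a + \<xi> *\<^sub>R h)) \<bullet> h)"
    proof (rule second_difference_mean_value[OF _ _ du])
      show "0 < t" "t * norm k + t * norm h < r"
        using t tkh by simp_all
    qed
    define e where "e y = g (a + y) - g a - H y" for y
    have e_bound: "norm (e y) \<le> \<eta> * norm y" if "norm y \<le> t * norm k + t * norm h" for y
      using d[of y] that tkh unfolding e_def by simp
    have "norm (t *\<^sub>R k + \<xi> *\<^sub>R h) \<le> t * norm k + t * norm h"
      using norm_scaleR_add_scaleR_le[of t t \<xi> k h] t \<xi> by simp
    then have e1: "norm (e (t *\<^sub>R k + \<xi> *\<^sub>R h)) \<le> \<eta> * (t * norm k + t * norm h)"
      using e_bound mult_left_mono[of _ _ \<eta>] \<open>\<eta> > 0\<close> by (meson less_imp_le order_trans)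
    have "norm (0 *\<^sub>R k + \<xi> *\<^sub>R h) \<le> t * norm h"
      using \<xi> by (simp add: mult_right_mono)
    moreover have "t * norm h \<le> t * norm k + t * norm h"
      using t by simp
    ultimately have e2: "norm (e (0 *\<^sub>R k + \<xi> *\<^sub>R h)) \<le> \<eta> * (t * norm h)"
      using e_bound mult_left_mono[of _ _ \<eta>] \<open>\<eta> > 0\<close> by (meson less_imp_le order_trans)
    have "g (a + t *\<^sub>R k + \<xi> *\<^sub>R h) - g (a + \<xi> *\<^sub>R h) - t *\<^sub>R H k
        = e (t *\<^sub>R k + \<xi> *\<^sub>R h) - e (0 *\<^sub>R k + \<xi> *\<^sub>R h)"
      unfolding e_def by (simp add: add.assoc linear_add[OF lin] linear_scale[OF lin])
    then have "norm (g (a + t *\<^sub>R k + \<xi> *\<^sub>R h) - g (a + \<xi> *\<^sub>R h) - t *\<^sub>R H k)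
        \<le> \<eta> * (t * norm k + t * norm h) + \<eta> * (t * norm h)"
      using norm_triangle_ineq4[of "e (t *\<^sub>R k + \<xi> *\<^sub>R h)" "e (0 *\<^sub>R k + \<xi> *\<^sub>R h)"] e1 e2
      by simp
    then have "\<bar>(g (a + t *\<^sub>R k + \<xi> *\<^sub>R h) - g (a + \<xi> *\<^sub>R h) - t *\<^sub>R H k) \<bullet> h\<bar>
        \<le> (\<eta> * (t * norm k + t * norm h) + \<eta> * (t * norm h)) * norm h"
      using Cauchy_Schwarz_ineq2 mult_right_mono norm_ge_zero order_trans by metis
    then have "\<bar>t * ((g (a + t *\<^sub>R k + \<xi> *\<^sub>R h) - g (a + \<xi> *\<^sub>R h) - t *\<^sub>R H k) \<bullet> h)\<bar>
        \<le> t * ((\<eta> * (t * norm k + t * norm h) + \<eta> * (t * norm h)) * norm h)"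
      using t by (simp add: abs_mult)
    then show "\<bar>u (a + t *\<^sub>R k + t *\<^sub>R h) - u (a + t *\<^sub>R h) - u (a + t *\<^sub>R k) + u a - t\<^sup>2 * (H k \<bullet> h)\<bar>
      \<le> t\<^sup>2 * \<eta> * (2 * norm h + norm k) * norm h"
      unfolding mv by (simp add: inner_diff_left power2_eq_square algebra_simps)
  qed
qed

lemma has_derivative_gradient_symmetric:
  fixes u :: "'a::euclidean_space \<Rightarrow> real" and g H :: "'a \<Rightarrow> 'a"
  assumes gH: "(g has_derivative H) (at a)" and r: "r > 0"
    and du: "\<And>y. y \<in> ball a r \<Longrightarrow> (u has_derivative (\<lambda>v. g y \<bullet> v)) (at y)"
  shows "H k \<bullet> h = H h \<bullet> k"
proof -
  define M where "M = (2 * norm h + norm k) * norm h + (2 * norm k + norm h) * norm k"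
  have "M \<ge> 0"
    unfolding M_def by simp
  have bound: "\<bar>H k \<bullet> h - H h \<bullet> k\<bar> \<le> \<eta> * M" if \<eta>: "\<eta> > 0" for \<eta>
  proof -
    obtain \<delta>1 where "\<delta>1 > 0" and \<delta>1: "\<forall>t. 0 < t \<and> t < \<delta>1 \<longrightarrow>
      \<bar>u (a + t *\<^sub>R k + t *\<^sub>R h) - u (a + t *\<^sub>R h) - u (a + t *\<^sub>R k) + u a - t\<^sup>2 * (H k \<bullet> h)\<bar>
        \<le> t\<^sup>2 * \<eta> * (2 * norm h + norm k) * norm h"
      using second_difference_estimate[OF gH r du \<eta>, of k h] by blast
    obtain \<delta>2 where "\<delta>2 > 0" and \<delta>2: "\<forall>t. 0 < t \<and> t < \<delta>2 \<longrightarrow>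
      \<bar>u (a + t *\<^sub>R h + t *\<^sub>R k) - u (a + t *\<^sub>R k) - u (a + t *\<^sub>R h) + u a - t\<^sup>2 * (H h \<bullet> k)\<bar>
        \<le> t\<^sup>2 * \<eta> * (2 * norm k + norm h) * norm k"
      using second_difference_estimate[OF gH r du \<eta>, of h k] by blast
    define t where "t = min \<delta>1 \<delta>2 / 2"
    have t: "0 < t" "t < \<delta>1" "t < \<delta>2"
      using \<open>\<delta>1 > 0\<close> \<open>\<delta>2 > 0\<close> by (auto simp: t_def)
    define D where "D = u (a + t *\<^sub>R k + t *\<^sub>R h) - u (a + t *\<^sub>R h) - u (a + t *\<^sub>R k) + u a"
    have "D = u (a + t *\<^sub>R h + t *\<^sub>R k) - u (a + t *\<^sub>R k) - u (a + t *\<^sub>R h) + u a"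
      unfolding D_def by (simp add: ac_simps)
    then have "\<bar>D - t\<^sup>2 * (H k \<bullet> h)\<bar> + \<bar>D - t\<^sup>2 * (H h \<bullet> k)\<bar> \<le> t\<^sup>2 * (\<eta> * M)"
      using \<delta>1 \<delta>2 t unfolding D_def M_def by (smt (verit) distrib_left mult.assoc)
    moreover have "t\<^sup>2 * \<bar>H k \<bullet> h - H h \<bullet> k\<bar> \<le> \<bar>D - t\<^sup>2 * (H k \<bullet> h)\<bar> + \<bar>D - t\<^sup>2 * (H h \<bullet> k)\<bar>"
    proof -
      have "t\<^sup>2 * \<bar>H k \<bullet> h - H h \<bullet> k\<bar> = \<bar>(D - t\<^sup>2 * (H h \<bullet> k)) - (D - t\<^sup>2 * (H k \<bullet> h))\<bar>"
        by (simp add: abs_mult flip: right_diff_distrib)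
      then show ?thesis
        by (metis abs_triangle_ineq4 add.commute)
    qed
    ultimately have "t\<^sup>2 * \<bar>H k \<bullet> h - H h \<bullet> k\<bar> \<le> t\<^sup>2 * (\<eta> * M)"
      by linarith
    then show ?thesis
      using t by simp
  qed
  have "\<bar>H k \<bullet> h - H h \<bullet> k\<bar> \<le> e" if "e > 0" for e
  proof -
    have "e / (M + 1) * M \<le> e"
      using \<open>M \<ge> 0\<close> that by (simp add: field_simps)
    then show ?thesis
      using bound[of "e / (M + 1)"] \<open>M \<ge> 0\<close> that by simp
  qed
  then show ?thesis
    by (metis abs_le_zero_iff eq_iff_diff_eq_0 field_le_epsilon add_0)
qed

lemma has_derivative_hess:
  assumes "twice_differentiable_at u x"
  shows "(grad u has_derivative hess u x) (at x)"
  using assms frechet_derivative_works unfolding twice_differentiable_at_def hess_def by blast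

lemma continuous_on_grad:
  assumes "\<And>x. x \<in> S \<Longrightarrow> twice_differentiable_at u x"
  shows "continuous_on S (grad u)"
  using assms unfolding twice_differentiable_at_def
  by (intro differentiable_imp_continuous_on differentiable_at_imp_differentiable_on) blast

lemma hess_symmetric:
  fixes u :: "'a::euclidean_space \<Rightarrow> real"
  assumes "twice_differentiable_at u x"
  shows "hess u x y \<bullet> z = y \<bullet> hess u x z"
proof -
  obtain r where "r > 0" and r: "\<And>y. y \<in> ball x r \<Longrightarrow> u differentiable at y"
    using assms unfolding twice_differentiable_at_def eventually_nhds_metric
    by (metis dist_commute mem_ball)
  from has_derivative_hess[OF assms] \<open>r > 0\<close> have "hess u x y \<bullet> z = hess u x z \<bullet> y"
    by (rule has_derivative_gradient_symmetric) (rule has_derivative_grad[OF r])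
  then show ?thesis
    by (simp add: inner_commute)
qed

lemma landweber_step_contracts:
  fixes H :: "'a::real_inner \<Rightarrow> 'a"
  assumes c: "0 < c" "c \<le> B"
    and bound: "\<And>x. norm (H x) \<le> B * norm x" and lower: "c * norm w \<le> norm (H w)"
    and sym: "H (H w) \<bullet> w = H w \<bullet> H w"
  shows "norm (w - (c\<^sup>2 / B ^ 4) *\<^sub>R H (H w)) \<le> (1 - c ^ 4 / B ^ 4 / 2) * norm w"
proof -
  define t where "t = c\<^sup>2 / B ^ 4"
  define a where "a = c ^ 4 / B ^ 4"
  have "B > 0"
    using c by simp
  have "t > 0" "a \<le> 1"
    using c \<open>B > 0\<close> by (simp_all add: t_def a_def power_mono)
  have ta: "2 * t * c\<^sup>2 - t\<^sup>2 * B ^ 4 = a"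
    using \<open>B > 0\<close> unfolding t_def a_def by (simp add: field_simps power2_eq_square eval_nat_numeral)
  have "c\<^sup>2 * norm w ^ 2 \<le> norm (H w) ^ 2"
    using power_mono[OF lower, of 2] c by (simp add: power_mult_distrib)
  then have first: "2 * t * (c\<^sup>2 * norm w ^ 2) \<le> 2 * t * norm (H w) ^ 2"
    by (rule mult_left_mono) (use \<open>t > 0\<close> in simp)
  have "norm (H (H w)) \<le> B * (B * norm w)"
    using order_trans[OF bound[of "H w"] mult_left_mono[OF bound[of w]]] \<open>B > 0\<close> by argo
  from power_mono[OF this, of 2] have "norm (H (H w)) ^ 2 \<le> B ^ 4 * norm w ^ 2"
    by (simp add: power_mult_distrib eval_nat_numeral mult_ac)
  then have second: "t\<^sup>2 * norm (H (H w)) ^ 2 \<le> t\<^sup>2 * (B ^ 4 * norm w ^ 2)"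
    by (rule mult_left_mono) simp
  have "t * (w \<bullet> H (H w)) = t * norm (H w) ^ 2"
    using sym by (simp add: inner_commute[of w] power2_norm_eq_inner)
  moreover have "t * (w \<bullet> H (H w)) * 2
      = norm w ^ 2 + t\<^sup>2 * norm (H (H w)) ^ 2 - norm (w - t *\<^sub>R H (H w)) ^ 2"
    using dot_norm_neg[of w "t *\<^sub>R H (H w)"] by (simp add: power_mult_distrib)
  ultimately have "norm (w - t *\<^sub>R H (H w)) ^ 2
      \<le> norm w ^ 2 - 2 * t * (c\<^sup>2 * norm w ^ 2) + t\<^sup>2 * (B ^ 4 * norm w ^ 2)"
    using first second by linarith
  also have "\<dots> = (1 - (2 * t * c\<^sup>2 - t\<^sup>2 * B ^ 4)) * norm w ^ 2"
    by (simp add: algebra_simps)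
  also have "\<dots> = (1 - a) * norm w ^ 2"
    by (simp only: ta)
  also have "\<dots> \<le> ((1 - a / 2) * norm w) ^ 2"
  proof -
    have "((1 - a / 2) * norm w) ^ 2 - (1 - a) * norm w ^ 2 = (a * norm w / 2) ^ 2"
      by (simp add: power2_eq_square algebra_simps)
    then show ?thesis
      by (metis diff_ge_0_iff_ge zero_le_power2)
  qed
  finally have "norm (w - t *\<^sub>R H (H w)) \<le> (1 - a / 2) * norm w"
    by (rule power2_le_imp_le) (use \<open>a \<le> 1\<close> in simp)
  then show ?thesis
    unfolding t_def a_def .
qed

lemma orth_proj_eq_0:
  fixes S :: "'a::euclidean_space set"
  assumes "subspace S" and "x \<in> orthogonal_comp S"
  shows "orth_proj S x = 0"
  unfolding orth_proj_def
proof (rule the_equality)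
  show "0 \<in> S \<and> x - 0 \<in> orthogonal_comp S"
    using assms by (simp add: subspace_0)
next
  fix y assume y: "y \<in> S \<and> x - y \<in> orthogonal_comp S"
  have "x - (x - y) \<in> orthogonal_comp S"
    by (rule subspace_diff[OF subspace_orthogonal_comp]) (use assms(2) y in auto)
  then have "y \<in> orthogonal_comp S"
    by simp
  then show "y = 0"
    using y orthogonal_Int_0[OF assms(1)] by blast
qed

lemma symmetric_linear_landweber_contraction:
  fixes H :: "'a::euclidean_space \<Rightarrow> 'a"
  assumes lin: "linear H" and sym: "\<And>x y. H x \<bullet> y = x \<bullet> H y"
  obtains t a where "t > 0" "0 < a" "a \<le> 1"
    and "\<And>w. w \<in> orthogonal_comp {v. H v = 0} \<Longrightarrow> norm (w - t *\<^sub>R H (H w)) \<le> (1 - a / 2) * norm w"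
proof -
  define V where "V = orthogonal_comp {v. H v = 0}"
  have "subspace V"
    unfolding V_def by (rule subspace_orthogonal_comp)
  moreover have "\<forall>w\<in>V. H w = 0 \<longrightarrow> w = 0"
    unfolding V_def orthogonal_comp_def orthogonal_def by auto
  moreover have "bounded_linear H"
    using lin by (simp add: linear_conv_bounded_linear)
  ultimately obtain c0 where "c0 > 0" and c0: "\<forall>w\<in>V. c0 * norm w \<le> norm (H w)"
    using injective_imp_isometric[OF closed_subspace] by blast
  obtain B where "B > 0" and B: "\<And>x. norm (H x) \<le> B * norm x"
    using linear_bounded_pos[OF lin] by blast
  define c where "c = min c0 B"
  have c: "0 < c" "c \<le> B"
    using \<open>c0 > 0\<close> \<open>B > 0\<close> by (auto simp: c_def)
  have lower: "c * norm w \<le> norm (H w)" if "w \<in> V" for w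
    using c0 that mult_right_mono[of c c0 "norm w"] unfolding c_def by fastforce
  show thesis
  proof (rule that)
    show "c\<^sup>2 / B ^ 4 > 0" "0 < c ^ 4 / B ^ 4"
      using c by simp_all
    show "c ^ 4 / B ^ 4 \<le> 1"
      using power_mono[OF \<open>c \<le> B\<close>, of 4] c by simp
    show "norm (w - (c\<^sup>2 / B ^ 4) *\<^sub>R H (H w)) \<le> (1 - c ^ 4 / B ^ 4 / 2) * norm w"
      if "w \<in> orthogonal_comp {v. H v = 0}" for w
      using c B lower sym that unfolding V_def by (intro landweber_step_contracts) auto
  qed
qed

lemma symmetric_linear_kernel_perturbation:
  fixes H :: "'a::euclidean_space \<Rightarrow> 'a"
  assumes lin: "linear H" and sym: "\<And>x y. H x \<bullet> y = x \<bullet> H y"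
  obtains \<eta> where "\<eta> > 0"
    and "\<And>g \<delta> p. continuous_on (ball 0 \<delta>) g \<Longrightarrow>
           (\<And>y. norm y < \<delta> \<Longrightarrow> norm (g y - H y) \<le> \<eta> * norm y) \<Longrightarrow>
           H p = 0 \<Longrightarrow> 2 * norm p < \<delta> \<Longrightarrow>
           \<exists>w \<in> orthogonal_comp {v. H v = 0}. norm w \<le> norm p \<and> H (g (p + w)) = 0"
proof -
  define V where "V = orthogonal_comp {v. H v = 0}"
  have "subspace V"
    unfolding V_def by (rule subspace_orthogonal_comp)
  have HV: "H x \<in> V" for x
    unfolding V_def orthogonal_comp_def orthogonal_def by (auto simp: sym[symmetric])
  obtain t a where "t > 0" "0 < a" "a \<le> 1"
    and contracts: "\<And>w. w \<in> V \<Longrightarrow> norm (w - t *\<^sub>R H (H w)) \<le> (1 - a / 2) * norm w"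
    using symmetric_linear_landweber_contraction[OF lin sym] unfolding V_def by blast
  obtain B where "B > 0" and B: "\<And>x. norm (H x) \<le> B * norm x"
    using linear_bounded_pos[OF lin] by blast
  define \<eta> where "\<eta> = a / (8 * t * B)"
  have "\<eta> > 0"
    using \<open>0 < a\<close> \<open>t > 0\<close> \<open>B > 0\<close> by (simp add: \<eta>_def)
  show thesis
  proof (rule that[OF \<open>\<eta> > 0\<close>])
    fix g \<delta> p
    assume cont: "continuous_on (ball 0 \<delta>) g"
      and approx: "\<And>y. norm y < \<delta> \<Longrightarrow> norm (g y - H y) \<le> \<eta> * norm y"
      and "H p = 0" and "2 * norm p < \<delta>"
    define S where "S = cball 0 (norm p) \<inter> V"
    define T where "T w = w - t *\<^sub>R H (g (p + w))" for w
    have near: "norm (p + w) \<le> 2 * norm p" "norm (p + w) < \<delta>" if "w \<in> S" for w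
      using that norm_triangle_ineq[of p w] \<open>2 * norm p < \<delta>\<close> by (auto simp: S_def)
    have "continuous_on S T"
    proof -
      have "continuous_on S (\<lambda>w. g (p + w))"
        by (rule continuous_on_compose2[OF cont]) (intro continuous_intros, auto simp: near)
      then have "continuous_on S (\<lambda>w. H (g (p + w)))"
        using lin by (rule linear_continuous_on_compose)
      then show ?thesis
        unfolding T_def by (intro continuous_intros)
    qed
    moreover have "T w \<in> S" if w: "w \<in> S" for w
    proof -
      have "w \<in> V" "norm w \<le> norm p"
        using w by (auto simp: S_def)
      define r where "r = g (p + w) - H (p + w)"
      have "norm r \<le> \<eta> * norm (p + w)"
        using approx near(2)[OF w] unfolding r_def by blast
      also have "\<dots> \<le> \<eta> * (2 * norm p)"
        using mult_left_mono[OF near(1)[OF w], of \<eta>] \<open>\<eta> > 0\<close> by simp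
      finally have "B * norm r \<le> B * (\<eta> * (2 * norm p))"
        using \<open>B > 0\<close> by (simp add: mult_left_mono[OF _ less_imp_le])
      then have "norm (H r) \<le> B * (\<eta> * (2 * norm p))"
        using B[of r] by (rule order_trans[rotated])
      then have "norm (t *\<^sub>R H r) \<le> t * (B * (\<eta> * (2 * norm p)))"
        using \<open>t > 0\<close> by simp
      also have "\<dots> = a / 4 * norm p"
        using \<open>t > 0\<close> \<open>B > 0\<close> by (simp add: \<eta>_def)
      finally have Hr: "norm (t *\<^sub>R H r) \<le> a / 4 * norm p" .
      have Tw: "T w = (w - t *\<^sub>R H (H w)) - t *\<^sub>R H r"
        unfolding T_def r_def using \<open>H p = 0\<close>
        by (simp add: linear_add[OF lin] linear_diff[OF lin] algebra_simps)
      have "norm (T w) \<le> (1 - a / 2) * norm w + a / 4 * norm p"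
        unfolding Tw by (rule order_trans[OF norm_triangle_ineq4 add_mono[OF contracts[OF \<open>w \<in> V\<close>] Hr]])
      also have "\<dots> \<le> (1 - a / 2) * norm p + a / 4 * norm p"
        using \<open>norm w \<le> norm p\<close> \<open>a \<le> 1\<close> by (intro add_right_mono mult_left_mono) simp_all
      also have "\<dots> \<le> norm p"
        using \<open>0 < a\<close> by (simp add: algebra_simps)
      finally have "norm (T w) \<le> norm p" .
      moreover have "T w \<in> V"
        unfolding T_def using \<open>w \<in> V\<close> HV \<open>subspace V\<close> by (intro subspace_diff subspace_scale)
      ultimately show "T w \<in> S"
        by (simp add: S_def)
    qed
    moreover have "compact S" "convex S" "0 \<in> S"
      unfolding S_def using \<open>subspace V\<close>
      by (simp_all add: compact_Int_closed closed_subspace convex_Int subspace_imp_convex subspace_0)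
    ultimately obtain w where "w \<in> S" "T w = w"
      using brouwer[of S T] by blast
    then show "\<exists>w \<in> orthogonal_comp {v. H v = 0}. norm w \<le> norm p \<and> H (g (p + w)) = 0"
      using \<open>t > 0\<close> by (auto simp: S_def T_def V_def)
  qed
qed

lemma symmetric_derivative_zeros_near_kernel:
  fixes g H :: "'a::euclidean_space \<Rightarrow> 'a"
  assumes gH: "(g has_derivative H) (at 0)" and "g 0 = 0"
    and "r > 0" and cont: "continuous_on (ball 0 r) g"
    and sym: "\<And>x y. H x \<bullet> y = x \<bullet> H y"
  obtains \<epsilon> where "\<epsilon> > 0"
    and "\<And>p. H p = 0 \<Longrightarrow> norm p < \<epsilon> \<Longrightarrow>
           \<exists>w \<in> orthogonal_comp {v. H v = 0}. norm w \<le> norm p \<and> norm (p + w) < r \<and> H (g (p + w)) = 0"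
proof -
  obtain \<eta> where "\<eta> > 0" and perturb: "\<And>g \<delta> p. continuous_on (ball 0 \<delta>) g \<Longrightarrow>
      (\<And>y. norm y < \<delta> \<Longrightarrow> norm (g y - H y) \<le> \<eta> * norm y) \<Longrightarrow> H p = 0 \<Longrightarrow> 2 * norm p < \<delta> \<Longrightarrow>
      \<exists>w \<in> orthogonal_comp {v. H v = 0}. norm w \<le> norm p \<and> H (g (p + w)) = 0"
    using symmetric_linear_kernel_perturbation[OF has_derivative_linear[OF gH] sym] by blast
  obtain d where "d > 0" and d: "\<And>y. norm y < d \<Longrightarrow> norm (g y - H y) \<le> \<eta> * norm y"
    using gH \<open>\<eta> > 0\<close> \<open>g 0 = 0\<close> unfolding has_derivative_at_alt by force
  define \<delta> where "\<delta> = min d r"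
  have "continuous_on (ball 0 \<delta>) g"
    using cont by (rule continuous_on_subset) (auto simp: \<delta>_def)
  moreover have "norm (g y - H y) \<le> \<eta> * norm y" if "norm y < \<delta>" for y
    using d that by (simp add: \<delta>_def)
  ultimately have zeros: "\<exists>w \<in> orthogonal_comp {v. H v = 0}. norm w \<le> norm p \<and> H (g (p + w)) = 0"
    if "H p = 0" "2 * norm p < \<delta>" for p
    using perturb that by blast
  show thesis
  proof (rule that[of "\<delta> / 2"])
    show "\<delta> / 2 > 0"
      using \<open>d > 0\<close> \<open>r > 0\<close> by (simp add: \<delta>_def)
    fix p assume "H p = 0" "norm p < \<delta> / 2"
    then obtain w where "w \<in> orthogonal_comp {v. H v = 0}" "norm w \<le> norm p" "H (g (p + w)) = 0"
      using zeros by fastforce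
    moreover have "norm (p + w) < r"
      using norm_triangle_ineq[of p w] \<open>norm w \<le> norm p\<close> \<open>norm p < \<delta> / 2\<close> by (simp add: \<delta>_def)
    ultimately show "\<exists>w \<in> orthogonal_comp {v. H v = 0}. norm w \<le> norm p \<and> norm (p + w) < r \<and> H (g (p + w)) = 0"
      by blast
  qed
qed

theorem lemma2p3:
  fixes u :: "'a::euclidean_space \<Rightarrow> real" and \<Omega> :: "'a set"
  assumes "open \<Omega>" and "0 \<in> \<Omega>"
    and "\<forall>x\<in>\<Omega>. twice_differentiable_at u x"
    and "grad u 0 = 0"
  defines "K \<equiv> {v. hess u 0 v = 0}"
  defines "Proj \<equiv> orth_proj (orthogonal_comp K)"
  shows "\<exists>\<epsilon>>0. \<exists>C. \<forall>p \<in> ball 0 \<epsilon> \<inter> K.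
           \<exists>q \<in> cball 0 (C * norm p) \<inter> {p + w | w. w \<in> orthogonal_comp K}.
             q \<in> \<Omega> \<and> Proj (grad u q) = 0"
proof -
  have twice: "twice_differentiable_at u x" if "x \<in> \<Omega>" for x
    using assms(3) that by blast
  obtain r where "r > 0" and r: "ball 0 r \<subseteq> \<Omega>"
    using \<open>open \<Omega>\<close> \<open>0 \<in> \<Omega>\<close> openE by blast
  have K: "{v. hess u 0 v = 0} = K"
    by (simp add: K_def)
  have "continuous_on (ball 0 r) (grad u)"
    using r twice by (intro continuous_on_grad) blast
  then obtain \<epsilon> where "\<epsilon> > 0" and zeros: "\<And>p. hess u 0 p = 0 \<Longrightarrow> norm p < \<epsilon> \<Longrightarrow>
      \<exists>w \<in> orthogonal_comp K. norm w \<le> norm p \<and> norm (p + w) < r \<and> hess u 0 (grad u (p + w)) = 0"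
    using symmetric_derivative_zeros_near_kernel[OF has_derivative_hess[OF twice[OF \<open>0 \<in> \<Omega>\<close>]]
        \<open>grad u 0 = 0\<close> \<open>r > 0\<close> _ hess_symmetric[OF twice[OF \<open>0 \<in> \<Omega>\<close>]], unfolded K]
    by blast
  have Proj_0: "Proj x = 0" if "x \<in> K" for x
    unfolding Proj_def using that orthogonal_comp_subset[of K]
    by (intro orth_proj_eq_0 subspace_orthogonal_comp) auto
  show ?thesis
  proof (rule exI[of _ \<epsilon>], intro conjI \<open>\<epsilon> > 0\<close> exI[of _ "2 :: real"] ballI)
    fix p assume "p \<in> ball 0 \<epsilon> \<inter> K"
    then obtain w where "w \<in> orthogonal_comp K" "norm w \<le> norm p" "norm (p + w) < r"
      and "grad u (p + w) \<in> K"
      using zeros unfolding K[symmetric] by fastforce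
    then have "p + w \<in> cball 0 (2 * norm p) \<inter> {p + w | w. w \<in> orthogonal_comp K}"
      and "p + w \<in> \<Omega> \<and> Proj (grad u (p + w)) = 0"
      using norm_triangle_ineq[of p w] r Proj_0 by auto
    then show "\<exists>q \<in> cball 0 (2 * norm p) \<inter> {p + w | w. w \<in> orthogonal_comp K}.
        q \<in> \<Omega> \<and> Proj (grad u q) = 0"
      by blast
  qed
qed

end
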